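(* Let $A$ be an antichain in $R^+$ and $k\ge1$. The ideal $\Phi(A)$ is of nilpotence $k$ if and only if for all $\beta_1,\dots,\beta_{k+1}\in A$ (not necessarily distinct) we have $\sum_{s=1}^{k+1}\beta_s\not\le\theta$.
   Context: $\mathfrak g$ is a complex simple Lie algebra with root system $R$, simple roots $\{\alpha_i\}_{i\in I}$, $Q^+$ the $\mathbb Z_{\ge0}$-span of the simple roots, $R^+=R\cap Q^+$, partial order $\lambda\le\mu$ iff $\mu-\lambda\in Q^+$, and $\theta$ the highest root. An antichain is a subset $A\subseteq R^+$ whose distinct elements are pairwise incomparable for $\le$. $\Phi(A)=\{\alpha\in R^+:\alpha\ge\beta\text{ for some }\beta\in A\}$. A subset $\Phi\subseteq R^+$ is of nilpotence $k$ if for any $\beta_1,\dots,\beta_{k+1}\in\Phi$ (not necessarily distinct) we have $\sum_{p=1}^{k+1}\beta_p\notin R$. *)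

theory Defs
  imports "HOL-Analysis.Analysis"
begin

text \<open>Root systems of complex simple Lie algebras = reduced, irreducible,
crystallographic root systems in a real Euclidean space.\<close>

definition root_system :: "'a::euclidean_space set \<Rightarrow> bool" where
  "root_system R \<longleftrightarrow>
     finite R \<and> 0 \<notin> R \<and> span R = UNIV \<and>
     (\<forall>\<alpha>\<in>R. \<forall>\<beta>\<in>R. \<beta> - (2 * (\<beta> \<bullet> \<alpha>) / (\<alpha> \<bullet> \<alpha>)) *\<^sub>R \<alpha> \<in> R) \<and>
     (\<forall>\<alpha>\<in>R. \<forall>\<beta>\<in>R. 2 * (\<beta> \<bullet> \<alpha>) / (\<alpha> \<bullet> \<alpha>) \<in> \<int>)"

definition reduced_root_system :: "'a::euclidean_space set \<Rightarrow> bool" where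
  "reduced_root_system R \<longleftrightarrow> root_system R \<and>
     (\<forall>\<alpha>\<in>R. \<forall>c::real. c *\<^sub>R \<alpha> \<in> R \<longrightarrow> c = 1 \<or> c = -1)"

definition irreducible_root_system :: "'a::euclidean_space set \<Rightarrow> bool" where
  "irreducible_root_system R \<longleftrightarrow> root_system R \<and>
     \<not> (\<exists>R1 R2. R1 \<noteq> {} \<and> R2 \<noteq> {} \<and> R1 \<union> R2 = R \<and> R1 \<inter> R2 = {} \<and>
                (\<forall>a\<in>R1. \<forall>b\<in>R2. a \<bullet> b = 0))"

definition is_base :: "'a::euclidean_space set \<Rightarrow> 'a set \<Rightarrow> bool" where
  "is_base R \<Delta> \<longleftrightarrow> \<Delta> \<subseteq> R \<and> independent \<Delta> \<and>
     (\<forall>\<beta>\<in>R. \<exists>c::'a \<Rightarrow> int. \<beta> = (\<Sum>\<alpha>\<in>\<Delta>. of_int (c \<alpha>) *\<^sub>R \<alpha>) \<and>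
                 ((\<forall>\<alpha>\<in>\<Delta>. c \<alpha> \<ge> 0) \<or> (\<forall>\<alpha>\<in>\<Delta>. c \<alpha> \<le> 0)))"

definition Qplus :: "'a::euclidean_space set \<Rightarrow> 'a set" where
  "Qplus \<Delta> = {\<Sum>\<alpha>\<in>\<Delta>. of_nat (c \<alpha>) *\<^sub>R \<alpha> | c :: 'a \<Rightarrow> nat. True}"

definition pos_roots :: "'a::euclidean_space set \<Rightarrow> 'a set \<Rightarrow> 'a set" where
  "pos_roots R \<Delta> = R \<inter> Qplus \<Delta>"

definition rle :: "'a::euclidean_space set \<Rightarrow> 'a \<Rightarrow> 'a \<Rightarrow> bool" where
  "rle \<Delta> x y \<longleftrightarrow> y - x \<in> Qplus \<Delta>"

definition is_highest_root :: "'a::euclidean_space set \<Rightarrow> 'a set \<Rightarrow> 'a \<Rightarrow> bool" where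
  "is_highest_root R \<Delta> \<theta> \<longleftrightarrow> \<theta> \<in> pos_roots R \<Delta> \<and> (\<forall>\<alpha>\<in>pos_roots R \<Delta>. rle \<Delta> \<alpha> \<theta>)"

definition antichain :: "'a::euclidean_space set \<Rightarrow> 'a set \<Rightarrow> 'a set \<Rightarrow> bool" where
  "antichain R \<Delta> A \<longleftrightarrow> A \<subseteq> pos_roots R \<Delta> \<and>
     (\<forall>a\<in>A. \<forall>b\<in>A. a \<noteq> b \<longrightarrow> \<not> rle \<Delta> a b)"

definition Phi :: "'a::euclidean_space set \<Rightarrow> 'a set \<Rightarrow> 'a set \<Rightarrow> 'a set" where
  "Phi R \<Delta> A = {\<alpha> \<in> pos_roots R \<Delta>. \<exists>\<beta>\<in>A. rle \<Delta> \<beta> \<alpha>}"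

definition nilpotence :: "'a::euclidean_space set \<Rightarrow> 'a set \<Rightarrow> nat \<Rightarrow> bool" where
  "nilpotence R \<Phi> k \<longleftrightarrow>
     (\<forall>\<beta>::nat \<Rightarrow> 'a. (\<forall>p\<in>{1..k+1}. \<beta> p \<in> \<Phi>) \<longrightarrow> (\<Sum>p=1..k+1. \<beta> p) \<notin> R)"

end

theory Submission imports Defs begin

(* If some sum of k+1 elements of A lies below theta, a "lifting lemma" shows that
   these summands can be raised inside R+ to elements of Phi(A) whose sum is a root:
   given a root rho above a sum of positive roots beta_s with nonzero difference nu,
   choose a simple root a with positive coefficient in nu and nu.a > 0; then either
   some beta_s.a < 0, so beta_s + a is again a positive root, or rho.a > 0, so
   rho - a is a root.  Both moves shrink nu, so induction on the coefficient sum of nu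
   terminates.  Conversely, a root that is a sum of elements of Phi(A) is a positive
   root, hence below theta, and so is every smaller sum of elements of A. *)

section \<open>The positive cone and the root order\<close>

lemma Qplus_iff: "x \<in> Qplus D \<longleftrightarrow> (\<exists>c::'a \<Rightarrow> nat. x = (\<Sum>a\<in>D. of_nat (c a) *\<^sub>R a))"
  for x :: "'a::euclidean_space"
  unfolding Qplus_def by auto

lemma Qplus_0: "0 \<in> Qplus D"
  unfolding Qplus_iff by (rule exI[of _ "\<lambda>_. 0"]) simp

lemma Qplus_add:
  assumes "x \<in> Qplus D" and "y \<in> Qplus D"
  shows "x + y \<in> Qplus D"
proof -
  obtain c1 c2 where "x = (\<Sum>a\<in>D. of_nat (c1 a) *\<^sub>R a)" and "y = (\<Sum>a\<in>D. of_nat (c2 a) *\<^sub>R a)"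
    using assms unfolding Qplus_iff by blast
  then have "x + y = (\<Sum>a\<in>D. of_nat (c1 a + c2 a) *\<^sub>R a)"
    by (simp add: sum.distrib scaleR_add_left)
  then show ?thesis unfolding Qplus_iff by (rule exI[where x="\<lambda>a. c1 a + c2 a"])
qed

lemma Qplus_sum: "finite I \<Longrightarrow> (\<And>s. s \<in> I \<Longrightarrow> f s \<in> Qplus D) \<Longrightarrow> sum f I \<in> Qplus D"
  by (induction I rule: finite_induct) (auto intro: Qplus_0 Qplus_add)

lemma Qplus_simple:
  assumes "finite D" and "a \<in> D"
  shows "a \<in> Qplus D"
proof -
  have "(\<Sum>b\<in>D. of_nat (if b = a then 1 else 0) *\<^sub>R b) = (\<Sum>b\<in>D. if b = a then b else 0)"
    by (rule sum.cong) auto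
  also have "\<dots> = a" using assms by (simp add: sum.delta')
  finally have "a = (\<Sum>b\<in>D. of_nat (if b = a then 1 else 0) *\<^sub>R b)" ..
  then show ?thesis unfolding Qplus_iff by (rule exI[where x="\<lambda>b. if b = a then 1 else 0"])
qed

text \<open>Removing one copy of a simple root that occurs with positive coefficient
  stays in the cone and lowers the coefficient sum; this is the induction measure
  of the lifting lemma.\<close>
lemma Qplus_remove_simple:
  fixes c :: "'a::euclidean_space \<Rightarrow> nat"
  assumes "finite D" and "a \<in> D" and "0 < c a"
  defines "c' \<equiv> c(a := c a - 1)"
  shows "(\<Sum>b\<in>D. of_nat (c b) *\<^sub>R b) - a = (\<Sum>b\<in>D. of_nat (c' b) *\<^sub>R b)"
    and "(\<Sum>b\<in>D. c' b) < (\<Sum>b\<in>D. c b)"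
proof -
  have rest: "(\<Sum>b\<in>D-{a}. f (c' b) b) = (\<Sum>b\<in>D-{a}. f (c b) b)" for f :: "nat \<Rightarrow> 'a \<Rightarrow> 'b::comm_monoid_add"
    unfolding c'_def by (rule sum.cong) auto
  have split: "(\<Sum>b\<in>D. f (d b) b) = f (d a) a + (\<Sum>b\<in>D-{a}. f (d b) b)"
    for f :: "nat \<Rightarrow> 'a \<Rightarrow> 'b::comm_monoid_add" and d
    using assms(1,2) by (simp add: sum.remove)
  have "of_nat (c' a) *\<^sub>R a = of_nat (c a) *\<^sub>R a - a"
    using assms(3) unfolding c'_def by (simp add: of_nat_diff scaleR_diff_left)
  then show "(\<Sum>b\<in>D. of_nat (c b) *\<^sub>R b) - a = (\<Sum>b\<in>D. of_nat (c' b) *\<^sub>R b)"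
    using split[of "\<lambda>n b. of_nat n *\<^sub>R b" c] split[of "\<lambda>n b. of_nat n *\<^sub>R b" c']
      rest[of "\<lambda>n b. of_nat n *\<^sub>R b"] by simp
  show "(\<Sum>b\<in>D. c' b) < (\<Sum>b\<in>D. c b)"
    using split[of "\<lambda>n b. n" c] split[of "\<lambda>n b. n" c'] rest[of "\<lambda>n b. n"] assms(3)
    unfolding c'_def by simp
qed

text \<open>A nonzero element of the cone pairs positively with one of the simple roots
  occurring in it, since its squared length is a non-negative combination of these
  pairings.\<close>
lemma Qplus_positive_pairing:
  fixes c :: "'a::euclidean_space \<Rightarrow> nat"
  assumes "x = (\<Sum>a\<in>D. of_nat (c a) *\<^sub>R a)" and "x \<noteq> 0"
  shows "\<exists>a\<in>D. 0 < c a \<and> 0 < x \<bullet> a"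
proof (rule ccontr)
  assume "\<not> ?thesis"
  then have "real (c a) * (x \<bullet> a) \<le> 0" if "a \<in> D" for a
    using that by (cases "c a = 0") (auto simp: mult_nonneg_nonpos not_less)
  moreover have "x \<bullet> x = (\<Sum>a\<in>D. real (c a) * (x \<bullet> a))"
    by (subst (2) assms(1)) (simp add: inner_sum_right)
  ultimately have "x \<bullet> x \<le> 0" by (simp add: sum_nonpos)
  then show False using assms(2) by (metis inner_gt_zero_iff not_less)
qed

lemma rle_refl: "rle D x x"
  unfolding rle_def by (simp add: Qplus_0)

lemma rle_trans: "rle D x y \<Longrightarrow> rle D y z \<Longrightarrow> rle D x z"
  unfolding rle_def using Qplus_add[of "y - x" D "z - y"] by simp

lemma rle_sum: "finite I \<Longrightarrow> (\<And>s. s \<in> I \<Longrightarrow> rle D (f s) (g s)) \<Longrightarrow> rle D (sum f I) (sum g I)"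
  unfolding rle_def using Qplus_sum[of I "\<lambda>s. g s - f s" D] by (simp add: sum_subtractf)

section \<open>Sums and differences of roots\<close>

lemma root_neg:
  assumes "root_system R" and "a \<in> R"
  shows "-a \<in> R"
proof -
  have "a \<bullet> a \<noteq> 0" using assms unfolding root_system_def by auto
  moreover have "a - (2 * (a \<bullet> a) / (a \<bullet> a)) *\<^sub>R a \<in> R"
    using assms unfolding root_system_def by blast
  ultimately show ?thesis by (simp add: scaleR_2)
qed

text \<open>In a reduced root system two roots that are not opposite are linearly
  independent, so the Cauchy-Schwarz inequality is strict for them.\<close>
lemma roots_strict_Cauchy_Schwarz:
  assumes "reduced_root_system R" and "a \<in> R" and "b \<in> R" and "b \<noteq> a" and "b \<noteq> -a"
  shows "(a \<bullet> b)\<^sup>2 < (a \<bullet> a) * (b \<bullet> b)"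
proof -
  have "a \<noteq> 0" and "b \<noteq> 0"
    using assms(1-3) unfolding reduced_root_system_def root_system_def by auto
  moreover have "b \<noteq> c *\<^sub>R a" for c
  proof
    assume "b = c *\<^sub>R a"
    then have "c = 1 \<or> c = -1" using assms(1,2,3) unfolding reduced_root_system_def by blast
    then show False using \<open>b = c *\<^sub>R a\<close> assms(4,5) by auto
  qed
  ultimately have "\<bar>a \<bullet> b\<bar> \<noteq> norm a * norm b"
    unfolding norm_cauchy_schwarz_equal collinear_lemma by blast
  then have "\<bar>a \<bullet> b\<bar> < norm a * norm b"
    using Cauchy_Schwarz_ineq2[of a b] by linarith
  then have "\<bar>a \<bullet> b\<bar>\<^sup>2 < (norm a * norm b)\<^sup>2"
    by (rule power_strict_mono) auto
  then show ?thesis by (simp add: power_mult_distrib dot_square_norm)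
qed

lemma negative_int_product_lt_4:
  fixes m n :: int
  assumes "m < 0" and "n < 0" and "m * n < 4"
  shows "m = -1 \<or> n = -1"
proof (rule ccontr)
  assume "\<not> (m = -1 \<or> n = -1)"
  then have "2 * 2 \<le> (-m) * (-n)" using assms(1,2) by (intro mult_mono) auto
  then show False using assms(3) by simp
qed

text \<open>Two non-opposite roots with negative inner product add up to a root: their
  Cartan integers are negative with product below 4, so one of them is -1 and the
  corresponding reflection of one root in the other is the sum.\<close>
lemma root_add:
  assumes reduced: "reduced_root_system R" and a: "a \<in> R" and b: "b \<in> R"
    and neg: "a \<bullet> b < 0" and not_opp: "b \<noteq> -a"
  shows "a + b \<in> R"
proof -
  have rs: "root_system R" using reduced unfolding reduced_root_system_def by auto
  have pos: "0 < a \<bullet> a" "0 < b \<bullet> b" using rs a b unfolding root_system_def by auto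
  define p where "p = 2 * (b \<bullet> a) / (a \<bullet> a)"
  define q where "q = 2 * (a \<bullet> b) / (b \<bullet> b)"
  obtain m n where m: "p = of_int m" and n: "q = of_int n"
    using rs a b unfolding root_system_def p_def q_def by (meson Ints_cases)
  have "p < 0" "q < 0" using neg pos unfolding p_def q_def by (auto simp: inner_commute divide_neg_pos)
  moreover have "b \<noteq> a" using neg by (metis inner_ge_zero not_less)
  then have "p * q < 4"
    using roots_strict_Cauchy_Schwarz[OF reduced a b _ not_opp] pos
    unfolding p_def q_def by (simp add: inner_commute field_simps power2_eq_square)
  ultimately have "m < 0" "n < 0" "m * n < 4"
    using m n by (auto simp flip: of_int_mult)
  then have "m = -1 \<or> n = -1" by (rule negative_int_product_lt_4)
  then show ?thesis
  proof
    assume "m = -1"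
    moreover have "b - p *\<^sub>R a \<in> R" using rs a b unfolding root_system_def p_def by blast
    ultimately show ?thesis using m by (simp add: add.commute)
  next
    assume "n = -1"
    moreover have "a - q *\<^sub>R b \<in> R" using rs a b unfolding root_system_def q_def by blast
    ultimately show ?thesis using n by simp
  qed
qed

lemma root_diff:
  assumes "reduced_root_system R" and "a \<in> R" and "b \<in> R" and "0 < a \<bullet> b" and "a \<noteq> b"
  shows "a - b \<in> R"
  using root_add[of R a "-b"] root_neg[of R b] assms
  unfolding reduced_root_system_def by auto

definition height_functional :: "'a::euclidean_space set \<Rightarrow> ('a \<Rightarrow> real) \<Rightarrow> bool" where
  "height_functional D g \<longleftrightarrow> linear g \<and> (\<forall>a\<in>D. g a = 1)"

lemma height_functional_exists:
  assumes "is_base R D"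
  obtains g where "height_functional D g"
  using linear_independent_extend[of D "\<lambda>_. 1::real"] assms
  unfolding is_base_def height_functional_def by blast

lemma height_of_combination:
  assumes "height_functional D g"
  shows "g (\<Sum>a\<in>D. of_nat (c a) *\<^sub>R a) = (\<Sum>a\<in>D. real (c a))"
  using assms unfolding height_functional_def by (simp add: linear_sum linear_cmul o_def)

lemma height_Qplus_nonneg:
  assumes "height_functional D g" and "x \<in> Qplus D"
  shows "0 \<le> g x"
proof -
  obtain c where "x = (\<Sum>a\<in>D. of_nat (c a) *\<^sub>R a)" using assms(2) unfolding Qplus_iff by blast
  then show ?thesis using height_of_combination[OF assms(1)] by (simp add: sum_nonneg)
qed

lemma height_Qplus_nonzero:
  assumes "height_functional D g" and "finite D" and "x \<in> Qplus D" and "x \<noteq> 0"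
  shows "1 \<le> g x"
proof -
  obtain c where x: "x = (\<Sum>a\<in>D. of_nat (c a) *\<^sub>R a)" using assms(3) unfolding Qplus_iff by blast
  have "\<exists>a\<in>D. c a \<noteq> 0"
  proof (rule ccontr)
    assume "\<not> ?thesis"
    then have "x = 0" unfolding x by simp
    then show False using assms(4) by simp
  qed
  then obtain a where "a \<in> D" and "c a \<noteq> 0" by blast
  then have "real (c a) \<le> (\<Sum>a\<in>D. real (c a))" using assms(2) by (intro member_le_sum) auto
  then show ?thesis using \<open>c a \<noteq> 0\<close> x height_of_combination[OF assms(1)] by simp
qed

section \<open>The lifting lemma\<close>

context
  fixes R D :: "'a::euclidean_space set" and g :: "'a \<Rightarrow> real"
  assumes reduced: "reduced_root_system R" and base: "is_base R D"
    and height: "height_functional D g"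
begin

lemma finite_base: "finite D"
  using base unfolding is_base_def by (auto intro: finiteI_independent)

lemma pos_root_height: "\<beta> \<in> pos_roots R D \<Longrightarrow> 1 \<le> g \<beta>"
  using height_Qplus_nonzero[OF height finite_base] reduced
  unfolding pos_roots_def reduced_root_system_def root_system_def by auto

text \<open>First move: a positive root pairing negatively with a simple root can be
  raised by that simple root (it is not its negative, by comparing heights).\<close>
lemma raise_pos_root:
  assumes "\<beta> \<in> pos_roots R D" and "a \<in> D" and "\<beta> \<bullet> a < 0"
  shows "\<beta> + a \<in> pos_roots R D"
proof -
  have "g a = 1" using height assms(2) unfolding height_functional_def by simp
  moreover have "g (-\<beta>) = - g \<beta>" using height unfolding height_functional_def by (simp add: linear_neg)
  ultimately have "a \<noteq> -\<beta>" using pos_root_height[OF assms(1)] by auto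
  moreover have "a \<in> R" using base assms(2) unfolding is_base_def by auto
  ultimately have "\<beta> + a \<in> R" using root_add[OF reduced _ _ assms(3)] assms(1) unfolding pos_roots_def by auto
  moreover have "a \<in> Qplus D" using Qplus_simple[OF finite_base assms(2)] .
  ultimately show ?thesis using assms(1) Qplus_add unfolding pos_roots_def by auto
qed

text \<open>A simple root has height 1, so it is not a nonempty sum of positive roots plus a
  nonzero element of the cone.\<close>
lemma simple_root_not_above_sum:
  assumes "a \<in> D" and "finite I" and "s \<in> I" and "\<forall>t\<in>I. \<beta> t \<in> pos_roots R D"
    and "\<nu> \<in> Qplus D" and "\<nu> \<noteq> 0"
  shows "a \<noteq> sum \<beta> I + \<nu>"
proof
  assume eq: "a = sum \<beta> I + \<nu>"
  have lin: "linear g" and "g a = 1" using height assms(1) unfolding height_functional_def by auto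
  have "g (sum \<beta> I) = (\<Sum>t\<in>I. g (\<beta> t))" by (simp add: linear_sum[OF lin])
  also have "\<dots> = g (\<beta> s) + (\<Sum>t\<in>I-{s}. g (\<beta> t))" using assms(2,3) by (simp add: sum.remove)
  finally have "g (sum \<beta> I) = g (\<beta> s) + (\<Sum>t\<in>I-{s}. g (\<beta> t))" .
  moreover have "0 \<le> (\<Sum>t\<in>I-{s}. g (\<beta> t))"
    using assms(4) pos_root_height by (intro sum_nonneg) force
  moreover have "1 \<le> g (\<beta> s)" using assms(3,4) pos_root_height by blast
  moreover have "1 \<le> g \<nu>" using height_Qplus_nonzero[OF height finite_base assms(5,6)] .
  ultimately show False using \<open>g a = 1\<close> eq by (simp add: linear_add[OF lin])
qed

text \<open>One step of the lifting: if the nonzero cone element nu = rho - sum beta pairs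
  positively with a simple root a, then either some beta_s can be raised by a, or
  rho pairs positively with a (the beta_s pair non-negatively with it) and so can be
  lowered by a.\<close>
lemma lifting_step:
  assumes "finite I" and "s0 \<in> I" and "\<rho> \<in> R" and "\<forall>s\<in>I. \<beta> s \<in> pos_roots R D"
    and "a \<in> D" and "\<rho> - sum \<beta> I \<in> Qplus D" and "\<rho> - sum \<beta> I \<noteq> 0"
    and "0 < (\<rho> - sum \<beta> I) \<bullet> a"
  shows "(\<exists>s\<in>I. \<beta> s + a \<in> pos_roots R D) \<or> \<rho> - a \<in> R"
proof (cases "\<exists>s\<in>I. \<beta> s \<bullet> a < 0")
  case True
  then show ?thesis using raise_pos_root assms(4,5) by blast
next
  case False
  then have "0 \<le> (\<Sum>s\<in>I. \<beta> s \<bullet> a)" by (auto intro: sum_nonneg simp: not_less)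
  then have "0 < \<rho> \<bullet> a"
    using assms(8) by (simp add: inner_diff_left inner_sum_left)
  moreover have "a \<noteq> sum \<beta> I + (\<rho> - sum \<beta> I)"
    using simple_root_not_above_sum[OF assms(5,1,2,4,6,7)] .
  then have "\<rho> \<noteq> a" by auto
  moreover have "a \<in> R" using base assms(5) unfolding is_base_def by auto
  ultimately show ?thesis using root_diff[OF reduced assms(3)] by blast
qed

lemma lift_to_root_induct:
  assumes "finite I" and "s0 \<in> I"
  shows "\<rho> \<in> R \<Longrightarrow> (\<forall>s\<in>I. \<beta> s \<in> pos_roots R D) \<Longrightarrow>
    \<rho> - sum \<beta> I = (\<Sum>a\<in>D. of_nat (c a) *\<^sub>R a) \<Longrightarrow> (\<Sum>a\<in>D. c a) = n \<Longrightarrow>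
    \<exists>\<delta>. (\<forall>s\<in>I. \<delta> s \<in> pos_roots R D \<and> rle D (\<beta> s) (\<delta> s)) \<and> sum \<delta> I \<in> R"
proof (induction n arbitrary: \<rho> \<beta> c rule: less_induct)
  case (less n \<rho> \<beta> c)
  define \<nu> where "\<nu> = \<rho> - sum \<beta> I"
  show ?case
  proof (cases "\<nu> = 0")
    case True
    then show ?thesis using less.prems(1,2) by (intro exI[of _ \<beta>]) (auto simp: \<nu>_def rle_refl)
  next
    case False
    then obtain a where a: "a \<in> D" "0 < c a" "0 < \<nu> \<bullet> a"
      using Qplus_positive_pairing less.prems(3) unfolding \<nu>_def by blast
    define c' where "c' = c(a := c a - 1)"
    have \<nu>': "\<nu> - a = (\<Sum>b\<in>D. of_nat (c' b) *\<^sub>R b)" and smaller: "(\<Sum>b\<in>D. c' b) < n"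
      using Qplus_remove_simple[of D a c, OF finite_base a(1,2)] less.prems(3,4)
      unfolding \<nu>_def c'_def by auto
    have "\<nu> \<in> Qplus D" using less.prems(3) unfolding \<nu>_def Qplus_iff by blast
    then consider s where "s \<in> I" and "\<beta> s + a \<in> pos_roots R D" | "\<rho> - a \<in> R"
      using lifting_step[OF assms less.prems(1,2) a(1)] False a(3) unfolding \<nu>_def by blast
    then show ?thesis
    proof cases
      case (1 s)
      define \<beta>' where "\<beta>' = \<beta>(s := \<beta> s + a)"
      have "sum \<beta>' I = sum \<beta> I + a"
        unfolding \<beta>'_def using 1(1) assms(1) by (simp add: sum.remove)
      then have "\<rho> - sum \<beta>' I = (\<Sum>b\<in>D. of_nat (c' b) *\<^sub>R b)"
        using \<nu>' unfolding \<nu>_def by (simp add: algebra_simps)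
      moreover have "\<forall>t\<in>I. \<beta>' t \<in> pos_roots R D"
        using less.prems(2) 1(2) unfolding \<beta>'_def by auto
      ultimately obtain \<delta> where \<delta>: "\<forall>t\<in>I. \<delta> t \<in> pos_roots R D \<and> rle D (\<beta>' t) (\<delta> t)" "sum \<delta> I \<in> R"
        using less.IH[OF smaller less.prems(1)] by blast
      have "rle D (\<beta> t) (\<beta>' t)" for t
        using Qplus_simple[OF finite_base a(1)] Qplus_0 unfolding \<beta>'_def rle_def by auto
      then show ?thesis using \<delta> rle_trans by blast
    next
      case 2
      moreover have "(\<rho> - a) - sum \<beta> I = (\<Sum>b\<in>D. of_nat (c' b) *\<^sub>R b)"
        using \<nu>' unfolding \<nu>_def by (simp add: algebra_simps)
      ultimately show ?thesis using less.IH[OF smaller _ less.prems(2)] by blast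
    qed
  qed
qed

lemma lift_to_root:
  assumes "finite I" and "s0 \<in> I" and "\<rho> \<in> R" and "\<forall>s\<in>I. \<beta> s \<in> pos_roots R D"
    and "rle D (sum \<beta> I) \<rho>"
  obtains \<delta> where "\<forall>s\<in>I. \<delta> s \<in> pos_roots R D \<and> rle D (\<beta> s) (\<delta> s)" and "sum \<delta> I \<in> R"
  using lift_to_root_induct[OF assms(1-4)] assms(5) unfolding rle_def Qplus_iff by blast

end

lemma sum_below_highest_root_breaks_nilpotence:
  assumes "reduced_root_system R" and "is_base R \<Delta>" and "is_highest_root R \<Delta> \<theta>"
    and "antichain R \<Delta> A" and "\<forall>s\<in>{1..k+1}. \<beta> s \<in> A"
    and "rle \<Delta> (\<Sum>s=1..k+1. \<beta> s) \<theta>"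
  shows "\<not> nilpotence R (Phi R \<Delta> A) k"
proof -
  obtain g where g: "height_functional \<Delta> g" using height_functional_exists[OF assms(2)] .
  have "1 \<in> {1..k+1}" by simp
  moreover have "\<theta> \<in> R" using assms(3) unfolding is_highest_root_def pos_roots_def by auto
  moreover have "\<forall>s\<in>{1..k+1}. \<beta> s \<in> pos_roots R \<Delta>" using assms(4,5) unfolding antichain_def by auto
  ultimately obtain \<delta> where \<delta>: "\<forall>s\<in>{1..k+1}. \<delta> s \<in> pos_roots R \<Delta> \<and> rle \<Delta> (\<beta> s) (\<delta> s)"
    and "(\<Sum>s=1..k+1. \<delta> s) \<in> R"
    using lift_to_root[OF assms(1,2) g finite_atLeastAtMost _ _ _ assms(6)] by blast
  moreover have "\<forall>p\<in>{1..k+1}. \<delta> p \<in> Phi R \<Delta> A" using \<delta> assms(5) unfolding Phi_def by auto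
  ultimately show ?thesis unfolding nilpotence_def by blast
qed

lemma root_sum_in_Phi_gives_sum_below_highest_root:
  assumes "is_highest_root R \<Delta> \<theta>" and "finite I" and "\<forall>p\<in>I. \<delta> p \<in> Phi R \<Delta> A" and "sum \<delta> I \<in> R"
  obtains \<beta> where "\<forall>p\<in>I. \<beta> p \<in> A" and "rle \<Delta> (sum \<beta> I) \<theta>"
proof -
  have "\<forall>p\<in>I. \<exists>b. b \<in> A \<and> rle \<Delta> b (\<delta> p)" using assms(3) unfolding Phi_def by auto
  then obtain \<beta> where \<beta>: "\<forall>p\<in>I. \<beta> p \<in> A \<and> rle \<Delta> (\<beta> p) (\<delta> p)" by metis
  have "sum \<delta> I \<in> Qplus \<Delta>" using assms(2,3) by (intro Qplus_sum) (auto simp: Phi_def pos_roots_def)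
  then have "rle \<Delta> (sum \<delta> I) \<theta>"
    using assms(1,4) unfolding is_highest_root_def pos_roots_def by auto
  moreover have "rle \<Delta> (sum \<beta> I) (sum \<delta> I)" using \<beta> assms(2) by (intro rle_sum) auto
  ultimately show ?thesis using that \<beta> rle_trans by blast
qed

theorem theorem1p5:
  fixes R \<Delta> A :: "'a::euclidean_space set" and \<theta> :: 'a and k :: nat
  assumes "reduced_root_system R" and "irreducible_root_system R"
    and "is_base R \<Delta>" and "is_highest_root R \<Delta> \<theta>"
    and "antichain R \<Delta> A" and "k \<ge> 1"
  shows "nilpotence R (Phi R \<Delta> A) k \<longleftrightarrow>
    (\<forall>\<beta>::nat \<Rightarrow> 'a. (\<forall>s\<in>{1..k+1}. \<beta> s \<in> A) \<longrightarrow> \<not> rle \<Delta> (\<Sum>s=1..k+1. \<beta> s) \<theta>)"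
proof
  assume "nilpotence R (Phi R \<Delta> A) k"
  then show "\<forall>\<beta>. (\<forall>s\<in>{1..k+1}. \<beta> s \<in> A) \<longrightarrow> \<not> rle \<Delta> (\<Sum>s=1..k+1. \<beta> s) \<theta>"
    using sum_below_highest_root_breaks_nilpotence[OF assms(1,3,4,5)] by blast
next
  assume no_sum_below: "\<forall>\<beta>. (\<forall>s\<in>{1..k+1}. \<beta> s \<in> A) \<longrightarrow> \<not> rle \<Delta> (\<Sum>s=1..k+1. \<beta> s) \<theta>"
  show "nilpotence R (Phi R \<Delta> A) k"
    unfolding nilpotence_def
    using root_sum_in_Phi_gives_sum_below_highest_root[OF assms(4) finite_atLeastAtMost] no_sum_below
    by blast
qed

end
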